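(* Let $\Phi^t:X\to X$, $t\in\mathbb{R}$, be a $C^1$ flow on a manifold $X$ with a Borel ergodic invariant probability measure $\mu$ of compact support; let $Y$ be a compact metric space with finite Borel measure $\nu$, $H_Y=L^2(Y,\nu)$; let $\vec F:X\to H_Y$ be a continuous observation map in $L^2(X,\mu;H_Y)$ and write $F_y(x)=\vec F(x)(y)$. Let $\Omega=X\times Y$, $\rho=\mu\times\nu$, $H_\Omega=L^2(\Omega,\rho)$. Fix $\tau>0$ and let $\tilde F_Q(x,y)=(F_y(x),F_y(\Phi^{-\tau}x),\ldots,F_y(\Phi^{-(Q-1)\tau}x))\in\mathbb{R}^Q$. Let $(k_Q)_{Q\in\mathbb{N}}$ be kernels on $\Omega\times\Omega$ such that (i) $k_Q(\omega,\omega')=\tilde k_Q(\tilde F_Q(\omega),\tilde F_Q(\omega'))$ for a continuous $\tilde k_Q:\mathbb{R}^Q\times\mathbb{R}^Q\to\mathbb{R}$; (ii) $k_Q$ converges in $H_\Omega\otimes H_\Omega\cong L^2(\Omega\times\Omega,\rho\times\rho)$ to some $k_\infty\in H_\Omega\otimes H_\Omega$; (iii) for all $t\in\mathbb{R}$ and $\rho\times\rho$-a.e. $((x,y),(x',y'))$, $k_\infty((\Phi^t(x),y),(\Phi^t(x'),y'))=k_\infty((x,y),(x',y'))$. Let $K_Q,K_\infty:H_\Omega\to H_\Omega$ be the integral operators $K f(\omega)=\int_\Omega k(\omega,\omega')f(\omega')\,d\rho(\omega')$ with kernels $k_Q$, $k_\infty$ respectively, and let $\tilde U^t f=f\circ(\Phi^t\times\mathrm{id}_Y)$.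 Then $K_Q\to K_\infty$ in operator norm as $Q\to\infty$ (and hence in spectrum), and $K_\infty\tilde U^t=\tilde U^tK_\infty$ for all $t\in\mathbb{R}$. *)

theory Defs
  imports "HOL-Probability.Probability"
begin

definition is_flow :: "(real \<Rightarrow> 'a::topological_space \<Rightarrow> 'a) \<Rightarrow> bool" where
  "is_flow \<Phi> \<longleftrightarrow> (\<forall>x. \<Phi> 0 x = x) \<and> (\<forall>s t x. \<Phi> (s + t) x = \<Phi> s (\<Phi> t x))
      \<and> continuous_on UNIV (\<lambda>(t, x). \<Phi> t x)"

definition measure_support :: "'a::topological_space measure \<Rightarrow> 'a set" where
  "measure_support M = {x. \<forall>U. open U \<and> x \<in> U \<longrightarrow> emeasure M U > 0}"

definition flow_invariant :: "'a measure \<Rightarrow> (real \<Rightarrow> 'a \<Rightarrow> 'a) \<Rightarrow> bool" where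
  "flow_invariant M \<Phi> \<longleftrightarrow> (\<forall>t. \<Phi> t \<in> M \<rightarrow>\<^sub>M M \<and> distr M M (\<Phi> t) = M)"

definition flow_ergodic :: "'a measure \<Rightarrow> (real \<Rightarrow> 'a \<Rightarrow> 'a) \<Rightarrow> bool" where
  "flow_ergodic M \<Phi> \<longleftrightarrow> (\<forall>A \<in> sets M. (\<forall>t. \<Phi> t -` A \<inter> space M = A)
      \<longrightarrow> measure M A = 0 \<or> measure M A = 1)"

definition L2 :: "'a measure \<Rightarrow> ('a \<Rightarrow> real) \<Rightarrow> bool" where
  "L2 M f \<longleftrightarrow> f \<in> borel_measurable M \<and> integrable M (\<lambda>x. (f x)\<^sup>2)"

definition L2_continuous :: "'b measure \<Rightarrow> ('a::metric_space \<Rightarrow> 'b \<Rightarrow> real) \<Rightarrow> bool" where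
  "L2_continuous N F \<longleftrightarrow> (\<forall>x. \<forall>e>0. \<exists>d>0. \<forall>x'. dist x' x < d \<longrightarrow>
      (\<integral>y. (F x' y - F x y)\<^sup>2 \<partial>N) < e)"

text \<open>R^Q embedded in nat => real as vectors vanishing from index Q on.\<close>
definition fin_vecs :: "nat \<Rightarrow> (nat \<Rightarrow> real) set" where
  "fin_vecs Q = {v. \<forall>i\<ge>Q. v i = 0}"

definition delay_map :: "(real \<Rightarrow> 'a \<Rightarrow> 'a) \<Rightarrow> real \<Rightarrow> ('a \<Rightarrow> 'b \<Rightarrow> real) \<Rightarrow> nat
    \<Rightarrow> 'a \<times> 'b \<Rightarrow> (nat \<Rightarrow> real)" where
  "delay_map \<Phi> \<tau> F Q = (\<lambda>(x, y). \<lambda>i. if i < Q then F (\<Phi> (- (real i * \<tau>)) x) y else 0)"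

definition int_op :: "'a measure \<Rightarrow> ('a \<Rightarrow> 'a \<Rightarrow> real) \<Rightarrow> ('a \<Rightarrow> real) \<Rightarrow> 'a \<Rightarrow> real" where
  "int_op M k f = (\<lambda>w. \<integral>w'. k w w' * f w' \<partial>M)"

definition op_dist_sq :: "'a measure \<Rightarrow> ('a \<Rightarrow> 'a \<Rightarrow> real) \<Rightarrow> ('a \<Rightarrow> 'a \<Rightarrow> real) \<Rightarrow> ennreal" where
  "op_dist_sq M k1 k2 = (SUP f \<in> {f. f \<in> borel_measurable M \<and> (\<integral>\<^sup>+ w. ennreal ((f w)\<^sup>2) \<partial>M) \<le> 1}.
      \<integral>\<^sup>+ w. ennreal ((int_op M k1 f w - int_op M k2 f w)\<^sup>2) \<partial>M)"

definition koopman :: "(real \<Rightarrow> 'a \<Rightarrow> 'a) \<Rightarrow> real \<Rightarrow> ('a \<times> 'b \<Rightarrow> real) \<Rightarrow> 'a \<times> 'b \<Rightarrow> real" where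
  "koopman \<Phi> t f = (\<lambda>(x, y). f (\<Phi> t x, y))"

end

theory Submission
  imports Defs
begin

text \<open>The operator norm of an integral operator is dominated by the \<open>L\<^sup>2\<close> norm of its kernel
  (Hilbert--Schmidt bound): by Cauchy--Schwarz in \<open>w'\<close>, \<open>(\<integral>(k\<^sub>1 - k\<^sub>2)(w,w') f(w') dw')\<^sup>2 \<le>
  \<integral>(k\<^sub>1 - k\<^sub>2)(w,w')\<^sup>2 dw'\<close> for \<open>\<parallel>f\<parallel> \<le> 1\<close>, and integrating over \<open>w\<close> with Tonelli gives the
  squared kernel distance. Hence \<open>L\<^sup>2\<close> convergence of the kernels \<open>k Q\<close> gives norm convergence
  of the operators. The commutation with the Koopman operator is a change of variables
  \<open>w' \<mapsto> (\<Phi>\<^sup>t \<times> id) w'\<close>, which preserves \<open>\<mu> \<times> \<nu>\<close>, combined with the almost-everywhere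
  invariance of \<open>k_inf\<close>.\<close>

lemma Cauchy_Schwarz_nn_integral_real:
  fixes f g :: "'c \<Rightarrow> real"
  assumes [measurable]: "f \<in> borel_measurable M" "g \<in> borel_measurable M"
  shows "(\<integral>\<^sup>+x. ennreal \<bar>f x * g x\<bar> \<partial>M)\<^sup>2
    \<le> (\<integral>\<^sup>+x. ennreal ((f x)\<^sup>2) \<partial>M) * (\<integral>\<^sup>+x. ennreal ((g x)\<^sup>2) \<partial>M)"
proof -
  have "(\<integral>\<^sup>+x. ennreal \<bar>f x\<bar> * ennreal \<bar>g x\<bar> \<partial>M)\<^sup>2
      \<le> (\<integral>\<^sup>+x. ennreal \<bar>f x\<bar> ^ 2 \<partial>M) * (\<integral>\<^sup>+x. ennreal \<bar>g x\<bar> ^ 2 \<partial>M)"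
    by (rule Cauchy_Schwarz_nn_integral) auto
  moreover have "\<And>x. ennreal \<bar>f x\<bar> * ennreal \<bar>g x\<bar> = ennreal \<bar>f x * g x\<bar>"
    by (simp add: ennreal_mult' abs_mult)
  moreover have "\<And>x. ennreal \<bar>f x\<bar> ^ 2 = ennreal ((f x)\<^sup>2)" "\<And>x. ennreal \<bar>g x\<bar> ^ 2 = ennreal ((g x)\<^sup>2)"
    by (subst ennreal_power; simp)+
  ultimately show ?thesis by simp
qed

lemma Cauchy_Schwarz_integral:
  fixes f g :: "'c \<Rightarrow> real"
  assumes [measurable]: "f \<in> borel_measurable M" "g \<in> borel_measurable M"
    and f_fin: "(\<integral>\<^sup>+x. ennreal ((f x)\<^sup>2) \<partial>M) < \<infinity>"
    and g_fin: "(\<integral>\<^sup>+x. ennreal ((g x)\<^sup>2) \<partial>M) < \<infinity>"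
  shows "integrable M (\<lambda>x. f x * g x)"
    and "ennreal ((\<integral>x. f x * g x \<partial>M)\<^sup>2)
      \<le> (\<integral>\<^sup>+x. ennreal ((f x)\<^sup>2) \<partial>M) * (\<integral>\<^sup>+x. ennreal ((g x)\<^sup>2) \<partial>M)"
proof -
  have CS: "(\<integral>\<^sup>+x. ennreal \<bar>f x * g x\<bar> \<partial>M)\<^sup>2
      \<le> (\<integral>\<^sup>+x. ennreal ((f x)\<^sup>2) \<partial>M) * (\<integral>\<^sup>+x. ennreal ((g x)\<^sup>2) \<partial>M)"
    by (rule Cauchy_Schwarz_nn_integral_real) auto
  also have "\<dots> < \<infinity>"
    using f_fin g_fin by (simp add: ennreal_mult_less_top)
  finally have fin: "(\<integral>\<^sup>+x. ennreal \<bar>f x * g x\<bar> \<partial>M) < \<infinity>"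
    by (simp add: power_less_top_ennreal)
  show int: "integrable M (\<lambda>x. f x * g x)"
    by (rule integrableI_bounded) (use fin in auto)
  have "(\<integral>x. f x * g x \<partial>M)\<^sup>2 \<le> (\<integral>x. \<bar>f x * g x\<bar> \<partial>M)\<^sup>2"
    by (metis abs_ge_zero integral_abs_bound power2_abs power_mono)
  then have "ennreal ((\<integral>x. f x * g x \<partial>M)\<^sup>2) \<le> (ennreal (\<integral>x. \<bar>f x * g x\<bar> \<partial>M))\<^sup>2"
    by (simp add: ennreal_power ennreal_leI)
  also have "ennreal (\<integral>x. \<bar>f x * g x\<bar> \<partial>M) = (\<integral>\<^sup>+x. ennreal \<bar>f x * g x\<bar> \<partial>M)"
    by (rule nn_integral_eq_integral[symmetric]) (use int in auto)
  finally show "ennreal ((\<integral>x. f x * g x \<partial>M)\<^sup>2)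
      \<le> (\<integral>\<^sup>+x. ennreal ((f x)\<^sup>2) \<partial>M) * (\<integral>\<^sup>+x. ennreal ((g x)\<^sup>2) \<partial>M)"
    using CS by simp
qed

lemma square_diff_le: "(a - b)\<^sup>2 \<le> 2 * a\<^sup>2 + 2 * (b::real)\<^sup>2"
proof -
  have "0 \<le> (a + b)\<^sup>2" by simp
  then show ?thesis unfolding power2_sum power2_diff by linarith
qed

lemma L2_square_diff_integrable:
  fixes a b :: "'c \<Rightarrow> real"
  assumes "L2 M a" "L2 M b"
  shows "integrable M (\<lambda>x. (a x - b x)\<^sup>2)"
proof -
  have [measurable]: "a \<in> borel_measurable M" "b \<in> borel_measurable M"
    using assms by (auto simp: L2_def)
  have "integrable M (\<lambda>x. 2 * (a x)\<^sup>2 + 2 * (b x)\<^sup>2)"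
    using assms by (auto simp: L2_def)
  then show ?thesis
    by (rule Bochner_Integration.integrable_bound) (auto simp: square_diff_le)
qed

lemma nn_integral_square_diff_finite:
  fixes a b :: "'c \<Rightarrow> real"
  assumes [measurable]: "a \<in> borel_measurable M" "b \<in> borel_measurable M"
    and a_fin: "(\<integral>\<^sup>+x. ennreal ((a x)\<^sup>2) \<partial>M) < \<infinity>"
    and b_fin: "(\<integral>\<^sup>+x. ennreal ((b x)\<^sup>2) \<partial>M) < \<infinity>"
  shows "(\<integral>\<^sup>+x. ennreal ((a x - b x)\<^sup>2) \<partial>M) < \<infinity>"
proof -
  have "(\<integral>\<^sup>+x. ennreal ((a x - b x)\<^sup>2) \<partial>M)
      \<le> (\<integral>\<^sup>+x. 2 * ennreal ((a x)\<^sup>2) + 2 * ennreal ((b x)\<^sup>2) \<partial>M)"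
  proof (rule nn_integral_mono)
    fix x
    have "ennreal ((a x - b x)\<^sup>2) \<le> ennreal (2 * (a x)\<^sup>2 + 2 * (b x)\<^sup>2)"
      by (rule ennreal_leI[OF square_diff_le])
    also have "\<dots> = 2 * ennreal ((a x)\<^sup>2) + 2 * ennreal ((b x)\<^sup>2)"
      by (simp add: ennreal_plus ennreal_mult)
    finally show "ennreal ((a x - b x)\<^sup>2) \<le> 2 * ennreal ((a x)\<^sup>2) + 2 * ennreal ((b x)\<^sup>2)" .
  qed
  also have "\<dots> = 2 * (\<integral>\<^sup>+x. ennreal ((a x)\<^sup>2) \<partial>M) + 2 * (\<integral>\<^sup>+x. ennreal ((b x)\<^sup>2) \<partial>M)"
    by (simp add: nn_integral_add nn_integral_cmult)
  also have "\<dots> < \<infinity>"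
    using a_fin b_fin by (simp add: ennreal_mult_less_top)
  finally show ?thesis .
qed

lemma square_diff_integral_mult_le:
  fixes g\<^sub>1 g\<^sub>2 f :: "'c \<Rightarrow> real"
  assumes [measurable]: "g\<^sub>1 \<in> borel_measurable M" "g\<^sub>2 \<in> borel_measurable M" "f \<in> borel_measurable M"
    and g\<^sub>1_fin: "(\<integral>\<^sup>+x. ennreal ((g\<^sub>1 x)\<^sup>2) \<partial>M) < \<infinity>"
    and g\<^sub>2_fin: "(\<integral>\<^sup>+x. ennreal ((g\<^sub>2 x)\<^sup>2) \<partial>M) < \<infinity>"
    and f_le_1: "(\<integral>\<^sup>+x. ennreal ((f x)\<^sup>2) \<partial>M) \<le> 1"
  shows "ennreal (((\<integral>x. g\<^sub>1 x * f x \<partial>M) - (\<integral>x. g\<^sub>2 x * f x \<partial>M))\<^sup>2)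
    \<le> (\<integral>\<^sup>+x. ennreal ((g\<^sub>1 x - g\<^sub>2 x)\<^sup>2) \<partial>M)"
proof -
  have f_fin: "(\<integral>\<^sup>+x. ennreal ((f x)\<^sup>2) \<partial>M) < \<infinity>"
    using f_le_1 by (simp add: order_le_less_trans)
  have "(\<integral>x. g\<^sub>1 x * f x \<partial>M) - (\<integral>x. g\<^sub>2 x * f x \<partial>M) = (\<integral>x. (g\<^sub>1 x - g\<^sub>2 x) * f x \<partial>M)"
    using Cauchy_Schwarz_integral(1)[OF _ _ g\<^sub>1_fin f_fin] Cauchy_Schwarz_integral(1)[OF _ _ g\<^sub>2_fin f_fin]
    by (simp add: left_diff_distrib)
  then have "ennreal (((\<integral>x. g\<^sub>1 x * f x \<partial>M) - (\<integral>x. g\<^sub>2 x * f x \<partial>M))\<^sup>2)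
      \<le> (\<integral>\<^sup>+x. ennreal ((g\<^sub>1 x - g\<^sub>2 x)\<^sup>2) \<partial>M) * (\<integral>\<^sup>+x. ennreal ((f x)\<^sup>2) \<partial>M)"
    using Cauchy_Schwarz_integral(2)[OF _ _ nn_integral_square_diff_finite[OF _ _ g\<^sub>1_fin g\<^sub>2_fin] f_fin]
    by simp
  also have "\<dots> \<le> (\<integral>\<^sup>+x. ennreal ((g\<^sub>1 x - g\<^sub>2 x)\<^sup>2) \<partial>M) * 1"
    by (rule mult_left_mono[OF f_le_1]) simp
  finally show ?thesis by simp
qed

lemma (in sigma_finite_measure) nn_integral_square_fst:
  fixes k :: "'c \<Rightarrow> 'a \<Rightarrow> real"
  assumes "L2 (N \<Otimes>\<^sub>M M) (\<lambda>(w, w'). k w w')"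
  shows "(\<integral>\<^sup>+w. \<integral>\<^sup>+w'. ennreal ((k w w')\<^sup>2) \<partial>M \<partial>N)
    = ennreal (\<integral>(w, w'). (k w w')\<^sup>2 \<partial>(N \<Otimes>\<^sub>M M))"
proof -
  have [measurable]: "(\<lambda>(w, w'). k w w') \<in> borel_measurable (N \<Otimes>\<^sub>M M)"
    and int: "integrable (N \<Otimes>\<^sub>M M) (\<lambda>p. (case p of (w, w') \<Rightarrow> k w w')\<^sup>2)"
    using assms by (auto simp: L2_def)
  have "(\<integral>\<^sup>+w. \<integral>\<^sup>+w'. ennreal ((k w w')\<^sup>2) \<partial>M \<partial>N)
      = (\<integral>\<^sup>+p. ennreal ((case p of (w, w') \<Rightarrow> k w w')\<^sup>2) \<partial>(N \<Otimes>\<^sub>M M))"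
    using nn_integral_fst[of "\<lambda>p. ennreal ((case p of (w, w') \<Rightarrow> k w w')\<^sup>2)" N] by simp
  also have "\<dots> = ennreal (\<integral>(w, w'). (k w w')\<^sup>2 \<partial>(N \<Otimes>\<^sub>M M))"
    using nn_integral_eq_integral[OF int] by (simp add: case_prod_beta')
  finally show ?thesis .
qed

lemma (in sigma_finite_measure) AE_nn_integral_square_section_finite:
  fixes k :: "'c \<Rightarrow> 'a \<Rightarrow> real"
  assumes "L2 (N \<Otimes>\<^sub>M M) (\<lambda>(w, w'). k w w')"
  shows "AE w in N. (\<integral>\<^sup>+w'. ennreal ((k w w')\<^sup>2) \<partial>M) < \<infinity>"
proof -
  have [measurable]: "(\<lambda>(w, w'). k w w') \<in> borel_measurable (N \<Otimes>\<^sub>M M)"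
    using assms by (auto simp: L2_def)
  have "(\<integral>\<^sup>+w. \<integral>\<^sup>+w'. ennreal ((k w w')\<^sup>2) \<partial>M \<partial>N) \<noteq> \<infinity>"
    using nn_integral_square_fst[OF assms] by simp
  then have "AE w in N. (\<integral>\<^sup>+w'. ennreal ((k w w')\<^sup>2) \<partial>M) \<noteq> \<infinity>"
    by (intro nn_integral_PInf_AE) (auto intro!:
        borel_measurable_nn_integral_fst[of "\<lambda>p. ennreal ((case p of (w, w') \<Rightarrow> k w w')\<^sup>2)" N, simplified])
  then show ?thesis
    by (simp add: top.not_eq_extremum)
qed

lemma op_dist_sq_le_kernel_dist:
  fixes M :: "'c measure" and k\<^sub>1 k\<^sub>2 :: "'c \<Rightarrow> 'c \<Rightarrow> real"
  assumes "sigma_finite_measure M"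
    and k\<^sub>1_L2: "L2 (M \<Otimes>\<^sub>M M) (\<lambda>(w, w'). k\<^sub>1 w w')"
    and k\<^sub>2_L2: "L2 (M \<Otimes>\<^sub>M M) (\<lambda>(w, w'). k\<^sub>2 w w')"
  shows "op_dist_sq M k\<^sub>1 k\<^sub>2 \<le> ennreal (\<integral>(w, w'). (k\<^sub>1 w w' - k\<^sub>2 w w')\<^sup>2 \<partial>(M \<Otimes>\<^sub>M M))"
  unfolding op_dist_sq_def
proof (rule SUP_least, clarsimp)
  interpret M: sigma_finite_measure M by fact
  have [measurable]: "(\<lambda>(w, w'). k\<^sub>1 w w') \<in> borel_measurable (M \<Otimes>\<^sub>M M)"
    "(\<lambda>(w, w'). k\<^sub>2 w w') \<in> borel_measurable (M \<Otimes>\<^sub>M M)"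
    using k\<^sub>1_L2 k\<^sub>2_L2 by (auto simp: L2_def)
  have diff_L2: "L2 (M \<Otimes>\<^sub>M M) (\<lambda>(w, w'). k\<^sub>1 w w' - k\<^sub>2 w w')"
    using L2_square_diff_integrable[OF k\<^sub>1_L2 k\<^sub>2_L2] by (simp add: L2_def case_prod_beta')
  fix f assume [measurable]: "f \<in> borel_measurable M"
    and f_le_1: "(\<integral>\<^sup>+w. ennreal ((f w)\<^sup>2) \<partial>M) \<le> 1"
  have "AE w in M. ennreal ((int_op M k\<^sub>1 f w - int_op M k\<^sub>2 f w)\<^sup>2)
      \<le> (\<integral>\<^sup>+w'. ennreal ((k\<^sub>1 w w' - k\<^sub>2 w w')\<^sup>2) \<partial>M)"
    using AE_space M.AE_nn_integral_square_section_finite[OF k\<^sub>1_L2]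
      M.AE_nn_integral_square_section_finite[OF k\<^sub>2_L2]
  proof eventually_elim
    case (elim w)
    have [measurable]: "(\<lambda>w'. k\<^sub>1 w w') \<in> borel_measurable M" "(\<lambda>w'. k\<^sub>2 w w') \<in> borel_measurable M"
      using measurable_Pair2[OF _ elim(1), of "\<lambda>(w, w'). k\<^sub>1 w w'"]
        measurable_Pair2[OF _ elim(1), of "\<lambda>(w, w'). k\<^sub>2 w w'"] by auto
    show ?case
      unfolding int_op_def using elim(2,3) f_le_1
      by (intro square_diff_integral_mult_le) auto
  qed
  then have "(\<integral>\<^sup>+w. ennreal ((int_op M k\<^sub>1 f w - int_op M k\<^sub>2 f w)\<^sup>2) \<partial>M)
      \<le> (\<integral>\<^sup>+w. \<integral>\<^sup>+w'. ennreal ((k\<^sub>1 w w' - k\<^sub>2 w w')\<^sup>2) \<partial>M \<partial>M)"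
    by (rule nn_integral_mono_AE)
  also have "\<dots> = ennreal (\<integral>(w, w'). (k\<^sub>1 w w' - k\<^sub>2 w w')\<^sup>2 \<partial>(M \<Otimes>\<^sub>M M))"
    using M.nn_integral_square_fst[OF diff_L2] by (simp add: case_prod_beta')
  finally show "(\<integral>\<^sup>+w. ennreal ((int_op M k\<^sub>1 f w - int_op M k\<^sub>2 f w)\<^sup>2) \<partial>M)
      \<le> ennreal (\<integral>(w, w'). (k\<^sub>1 w w' - k\<^sub>2 w w')\<^sup>2 \<partial>(M \<Otimes>\<^sub>M M))" .
qed

lemma op_dist_sq_tendsto_0:
  fixes M :: "'c measure" and k :: "nat \<Rightarrow> 'c \<Rightarrow> 'c \<Rightarrow> real"
  assumes "sigma_finite_measure M"
    and "\<And>n. L2 (M \<Otimes>\<^sub>M M) (\<lambda>(w, w'). k n w w')"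
    and "L2 (M \<Otimes>\<^sub>M M) (\<lambda>(w, w'). k_lim w w')"
    and "(\<lambda>n. \<integral>(w, w'). (k n w w' - k_lim w w')\<^sup>2 \<partial>(M \<Otimes>\<^sub>M M)) \<longlonglongrightarrow> 0"
  shows "(\<lambda>n. op_dist_sq M (k n) k_lim) \<longlonglongrightarrow> 0"
proof (rule tendsto_sandwich[where f = "\<lambda>_. 0"])
  show "\<forall>\<^sub>F n in sequentially. op_dist_sq M (k n) k_lim
      \<le> ennreal (\<integral>(w, w'). (k n w w' - k_lim w w')\<^sup>2 \<partial>(M \<Otimes>\<^sub>M M))"
    using assms by (intro always_eventually allI op_dist_sq_le_kernel_dist)
  show "(\<lambda>n. ennreal (\<integral>(w, w'). (k n w w' - k_lim w w')\<^sup>2 \<partial>(M \<Otimes>\<^sub>M M))) \<longlonglongrightarrow> 0"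
    using tendsto_ennrealI[OF assms(4)] by simp
qed auto

lemma distr_pair_measure_map_fst:
  assumes "T \<in> M \<rightarrow>\<^sub>M M" "distr M M T = M" "sigma_finite_measure N"
  shows "distr (M \<Otimes>\<^sub>M N) (M \<Otimes>\<^sub>M N) (\<lambda>(x, y). (T x, y)) = M \<Otimes>\<^sub>M N"
proof -
  have "distr M M T \<Otimes>\<^sub>M distr N N id = distr (M \<Otimes>\<^sub>M N) (M \<Otimes>\<^sub>M N) (\<lambda>(x, y). (T x, id y))"
    using assms by (intro pair_measure_distr) (auto simp: distr_id[unfolded id_def] id_def)
  then show ?thesis
    using assms(2) by (simp add: distr_id[unfolded id_def] id_def)
qed

lemma int_op_comp_measure_preserving:
  fixes k :: "'c \<Rightarrow> 'c \<Rightarrow> real"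
  assumes "sigma_finite_measure M"
    and T_meas[measurable]: "T \<in> M \<rightarrow>\<^sub>M M" and T_distr: "distr M M T = M"
    and [measurable]: "(\<lambda>(w, w'). k w w') \<in> borel_measurable (M \<Otimes>\<^sub>M M)" "f \<in> borel_measurable M"
    and k_inv: "AE p in M \<Otimes>\<^sub>M M. k (T (fst p)) (T (snd p)) = k (fst p) (snd p)"
  shows "AE w in M. int_op M k (f \<circ> T) w = int_op M k f (T w)"
proof -
  interpret M: sigma_finite_measure M by fact
  interpret MM: pair_sigma_finite M M by unfold_locales
  have sections: "(\<lambda>w'. k w w') \<in> borel_measurable M" if "w \<in> space M" for w
    using measurable_Pair2[OF _ that, of "\<lambda>(w, w'). k w w'"] by simp
  show ?thesis
    using AE_space MM.AE_pair[OF k_inv]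
  proof eventually_elim
    case (elim w)
    have Tw: "T w \<in> space M"
      using elim(1) measurable_space[OF T_meas] by blast
    note sections[OF elim(1), measurable] sections[OF Tw, measurable]
    have "int_op M k f (T w) = (\<integral>w'. k (T w) w' * f w' \<partial>distr M M T)"
      by (simp add: int_op_def T_distr)
    also have "\<dots> = (\<integral>w'. k (T w) (T w') * f (T w') \<partial>M)"
      using Tw by (intro integral_distr) measurable
    also have "\<dots> = (\<integral>w'. k w w' * f (T w') \<partial>M)"
      using elim(2) by (intro integral_cong_AE) (auto elim!: eventually_mono)
    finally show ?case
      by (simp add: int_op_def)
  qed
qed

lemma int_op_koopman_commute:
  fixes \<Phi> :: "real \<Rightarrow> 'a \<Rightarrow> 'a" and k :: "'a \<times> 'b \<Rightarrow> 'a \<times> 'b \<Rightarrow> real"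
  assumes [measurable]: "\<Phi> t \<in> \<mu> \<rightarrow>\<^sub>M \<mu>" and \<Phi>_distr: "distr \<mu> \<mu> (\<Phi> t) = \<mu>"
    and \<mu>_sf: "sigma_finite_measure \<mu>" and \<nu>_sf: "sigma_finite_measure \<nu>"
    and k_meas: "(\<lambda>(w, w'). k w w') \<in> borel_measurable ((\<mu> \<Otimes>\<^sub>M \<nu>) \<Otimes>\<^sub>M (\<mu> \<Otimes>\<^sub>M \<nu>))"
    and f_meas: "f \<in> borel_measurable (\<mu> \<Otimes>\<^sub>M \<nu>)"
    and k_inv: "AE ((x, y), (x', y')) in (\<mu> \<Otimes>\<^sub>M \<nu>) \<Otimes>\<^sub>M (\<mu> \<Otimes>\<^sub>M \<nu>).
                  k (\<Phi> t x, y) (\<Phi> t x', y') = k (x, y) (x', y')"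
  shows "AE w in \<mu> \<Otimes>\<^sub>M \<nu>. int_op (\<mu> \<Otimes>\<^sub>M \<nu>) k (koopman \<Phi> t f) w
    = koopman \<Phi> t (int_op (\<mu> \<Otimes>\<^sub>M \<nu>) k f) w"
proof -
  define T where "T = (\<lambda>(x::'a, y::'b). (\<Phi> t x, y))"
  have "koopman \<Phi> t g = g \<circ> T" for g :: "'a \<times> 'b \<Rightarrow> real"
    by (auto simp: koopman_def T_def)
  moreover have "AE w in \<mu> \<Otimes>\<^sub>M \<nu>. int_op (\<mu> \<Otimes>\<^sub>M \<nu>) k (f \<circ> T) w = int_op (\<mu> \<Otimes>\<^sub>M \<nu>) k f (T w)"
  proof (rule int_op_comp_measure_preserving)
    show "sigma_finite_measure (\<mu> \<Otimes>\<^sub>M \<nu>)"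
      using \<mu>_sf \<nu>_sf by (rule sigma_finite_pair_measure)
    show "T \<in> \<mu> \<Otimes>\<^sub>M \<nu> \<rightarrow>\<^sub>M \<mu> \<Otimes>\<^sub>M \<nu>"
      unfolding T_def by measurable
    show "distr (\<mu> \<Otimes>\<^sub>M \<nu>) (\<mu> \<Otimes>\<^sub>M \<nu>) T = \<mu> \<Otimes>\<^sub>M \<nu>"
      unfolding T_def using \<Phi>_distr \<nu>_sf by (intro distr_pair_measure_map_fst) auto
    show "AE p in (\<mu> \<Otimes>\<^sub>M \<nu>) \<Otimes>\<^sub>M (\<mu> \<Otimes>\<^sub>M \<nu>). k (T (fst p)) (T (snd p)) = k (fst p) (snd p)"
      using k_inv by eventually_elim (auto simp: T_def)
  qed (use k_meas f_meas in auto)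
  ultimately show ?thesis
    by (simp add: comp_def)
qed

theorem theorem2:
  fixes \<Phi> :: "real \<Rightarrow> 'a::{metric_space, second_countable_topology} \<Rightarrow> 'a"
    and \<mu> :: "'a measure"
    and \<nu> :: "'b::metric_space measure"
    and F :: "'a \<Rightarrow> 'b \<Rightarrow> real"
    and \<tau> :: real
    and kt :: "nat \<Rightarrow> (nat \<Rightarrow> real) \<Rightarrow> (nat \<Rightarrow> real) \<Rightarrow> real"
    and k :: "nat \<Rightarrow> 'a \<times> 'b \<Rightarrow> 'a \<times> 'b \<Rightarrow> real"
    and k_inf :: "'a \<times> 'b \<Rightarrow> 'a \<times> 'b \<Rightarrow> real"
  assumes flow: "is_flow \<Phi>"
    and mu_borel: "sets \<mu> = sets borel"
    and mu_prob: "prob_space \<mu>"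
    and mu_inv: "flow_invariant \<mu> \<Phi>"
    and mu_erg: "flow_ergodic \<mu> \<Phi>"
    and mu_supp: "compact (measure_support \<mu>)"
    and Y_compact: "compact (UNIV :: 'b set)"
    and nu_borel: "sets \<nu> = sets borel"
    and nu_fin: "finite_measure \<nu>"
    and F_L2Y: "\<And>x. L2 \<nu> (F x)"
    and F_cont: "L2_continuous \<nu> F"
    and F_L2: "L2 (\<mu> \<Otimes>\<^sub>M \<nu>) (\<lambda>(x, y). F x y)"
    and tau_pos: "\<tau> > 0"
    and kt_cont: "\<And>Q. continuous_on (fin_vecs Q \<times> fin_vecs Q) (\<lambda>(u, v). kt Q u v)"
    and k_def: "\<And>Q w w'. k Q w w' = kt Q (delay_map \<Phi> \<tau> F Q w) (delay_map \<Phi> \<tau> F Q w')"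
    and k_L2: "\<And>Q. L2 ((\<mu> \<Otimes>\<^sub>M \<nu>) \<Otimes>\<^sub>M (\<mu> \<Otimes>\<^sub>M \<nu>)) (\<lambda>(w, w'). k Q w w')"
    and k_inf_L2: "L2 ((\<mu> \<Otimes>\<^sub>M \<nu>) \<Otimes>\<^sub>M (\<mu> \<Otimes>\<^sub>M \<nu>)) (\<lambda>(w, w'). k_inf w w')"
    and k_conv: "(\<lambda>Q. \<integral>(w, w'). (k Q w w' - k_inf w w')\<^sup>2 \<partial>((\<mu> \<Otimes>\<^sub>M \<nu>) \<Otimes>\<^sub>M (\<mu> \<Otimes>\<^sub>M \<nu>)))
                  \<longlonglongrightarrow> 0"
    and k_inf_inv: "\<And>t. AE ((x, y), (x', y')) in (\<mu> \<Otimes>\<^sub>M \<nu>) \<Otimes>\<^sub>M (\<mu> \<Otimes>\<^sub>M \<nu>).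
                  k_inf (\<Phi> t x, y) (\<Phi> t x', y') = k_inf (x, y) (x', y')"
  shows "(\<lambda>Q. op_dist_sq (\<mu> \<Otimes>\<^sub>M \<nu>) (k Q) k_inf) \<longlonglongrightarrow> 0
    \<and> (\<forall>t f. L2 (\<mu> \<Otimes>\<^sub>M \<nu>) f \<longrightarrow>
         (AE w in \<mu> \<Otimes>\<^sub>M \<nu>. int_op (\<mu> \<Otimes>\<^sub>M \<nu>) k_inf (koopman \<Phi> t f) w
                            = koopman \<Phi> t (int_op (\<mu> \<Otimes>\<^sub>M \<nu>) k_inf f) w))"
proof -
  interpret \<mu>: prob_space \<mu> by (rule mu_prob)
  interpret \<nu>: finite_measure \<nu> by (rule nu_fin)
  have \<rho>_sf: "sigma_finite_measure (\<mu> \<Otimes>\<^sub>M \<nu>)"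
    by (intro sigma_finite_pair_measure \<mu>.sigma_finite_measure_axioms \<nu>.sigma_finite_measure_axioms)
  have "AE w in \<mu> \<Otimes>\<^sub>M \<nu>. int_op (\<mu> \<Otimes>\<^sub>M \<nu>) k_inf (koopman \<Phi> t f) w
      = koopman \<Phi> t (int_op (\<mu> \<Otimes>\<^sub>M \<nu>) k_inf f) w"
    if "L2 (\<mu> \<Otimes>\<^sub>M \<nu>) f" for t f
    using mu_inv that k_inf_L2 k_inf_inv[of t]
    by (intro int_op_koopman_commute \<mu>.sigma_finite_measure_axioms \<nu>.sigma_finite_measure_axioms)
      (auto simp: flow_invariant_def L2_def)
  then show ?thesis
    using op_dist_sq_tendsto_0[OF \<rho>_sf k_L2 k_inf_L2 k_conv] by blast
qed

end
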